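(* Let $H\in M_N(\mathbb C)$ be a complex Hadamard matrix with rows $H_1,\dots,H_N\in\mathbb T^N$. Define $U_{ij}\in M_N(\mathbb C)$ as the orthogonal projection onto $\mathbb C\cdot(H_i/H_j)$ (coordinatewise quotient). Then $$U_{ij}=\frac{1}{N}\left(\frac{H_{ik}H_{jl}}{H_{il}H_{jk}}\right)_{kl},$$ the matrix $U=(U_{ij})$ is magic, the matrix $U'$ defined by $(U'_{ij})_{kl}=(U_{kl})_{ij}$ is magic as well (so $U$ is a projective model), and $U'(H)=U(H^t)$.
   Context: A complex Hadamard matrix is an $N\times N$ matrix with all entries of modulus $1$ and pairwise orthogonal rows. A square matrix of operators is magic if its entries are orthogonal projections and each row and column sums to $1$. $U(H)$ denotes the matrix $(U_{ij})$ constructed from $H$ as in the statement. *)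

theory Defs
  imports "HOL-Analysis.Analysis"
begin

definition complex_hadamard :: "complex^'n^'n \<Rightarrow> bool" where
  "complex_hadamard H \<longleftrightarrow>
     (\<forall>i k. norm (H$i$k) = 1) \<and>
     (\<forall>i j. i \<noteq> j \<longrightarrow> (\<Sum>k\<in>UNIV. H$i$k * cnj (H$j$k)) = 0)"

definition cadjoint :: "complex^'n^'n \<Rightarrow> complex^'n^'n" where
  "cadjoint A = (\<chi> i j. cnj (A$j$i))"

definition is_orth_proj :: "complex^'n^'n \<Rightarrow> bool" where
  "is_orth_proj P \<longleftrightarrow> P ** P = P \<and> cadjoint P = P"

text \<open>The orthogonal projection onto the line C*v (v nonzero):
  x \<mapsto> (<v,x>/<v,v>) v, i.e. the matrix (v_k conj(v_l) / ||v||^2)_{kl}.\<close>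
definition proj_line :: "complex^'n \<Rightarrow> complex^'n^'n" where
  "proj_line v = (\<chi> k l. v$k * cnj (v$l) / (\<Sum>m\<in>UNIV. v$m * cnj (v$m)))"

definition magic :: "('i::finite \<Rightarrow> 'i \<Rightarrow> complex^'m^'m) \<Rightarrow> bool" where
  "magic M \<longleftrightarrow> (\<forall>i j. is_orth_proj (M i j)) \<and>
     (\<forall>i. (\<Sum>j\<in>UNIV. M i j) = mat 1) \<and>
     (\<forall>j. (\<Sum>i\<in>UNIV. M i j) = mat 1)"

definition Umat :: "complex^'n^'n \<Rightarrow> 'n \<Rightarrow> 'n \<Rightarrow> complex^'n^'n" where
  "Umat H i j = proj_line (\<chi> k. H$i$k / H$j$k)"

definition Uprime :: "('n \<Rightarrow> 'n \<Rightarrow> complex^'n^'n) \<Rightarrow> 'n \<Rightarrow> 'n \<Rightarrow> complex^'n^'n" where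
  "Uprime U i j = (\<chi> k l. (U k l)$i$j)"

end

theory Submission imports Defs begin

text \<open>Since the entries of H have modulus one, 1/H_ab = conj(H_ab). Hence
  U_ij = (1/N)(H_ik H_jl / H_il H_jk)_kl, a rank one projection, and the entries of the
  row and column sums of U are multiples of sums of the form
  \<Sum>_j H_jl/H_jk = \<Sum>_j H_jl conj(H_jk), which are N\<delta>_kl because the columns of a
  Hadamard matrix are orthogonal too (H H* = N 1 forces H* H = N 1). The formula for
  U_ij is symmetric under exchanging (i,j) with (k,l) and H with its transpose, which
  gives U' = U(H^t), and H^t is again Hadamard.\<close>

lemma complex_unit_mult_cnj: "norm (z::complex) = 1 \<Longrightarrow> z * cnj z = 1"
  by (metis complex_norm_square mult.commute of_real_1 power_one)

lemma complex_unit_cnj_eq_inverse: "norm (z::complex) = 1 \<Longrightarrow> cnj z = 1 / z"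
  using complex_unit_mult_cnj[of z] by (auto simp: eq_divide_eq mult.commute)

lemma hadamard_norm_entry: "complex_hadamard H \<Longrightarrow> norm (H$i$k) = 1"
  unfolding complex_hadamard_def by blast

lemma hadamard_entry_nonzero: "complex_hadamard H \<Longrightarrow> H$i$k \<noteq> 0"
  using hadamard_norm_entry by (metis norm_zero zero_neq_one)

lemma hadamard_row_orth:
  assumes "complex_hadamard (H::complex^'n^'n)"
  shows "(\<Sum>k\<in>UNIV. H$i$k * cnj (H$j$k)) = (if i = j then of_nat CARD('n) else 0)"
  using assms unfolding complex_hadamard_def by (auto simp: complex_unit_mult_cnj)

lemma hadamard_col_orth:
  assumes "complex_hadamard (H::complex^'n^'n)"
  shows "(\<Sum>i\<in>UNIV. H$i$k * cnj (H$i$l)) = (if k = l then of_nat CARD('n) else 0)"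
proof -
  define N where "N = (of_nat CARD('n) :: complex)"
  define H' where "H' = (\<chi> k j. cnj (H$j$k) / N)"
  have "H ** H' = mat 1"
    unfolding H'_def matrix_matrix_mult_def mat_def
    by (simp add: vec_eq_iff sum_divide_distrib[symmetric] hadamard_row_orth[OF assms] N_def)
  then have "(H' ** H)$l$k = mat 1 $l$k"
    using matrix_left_right_inverse by metis
  then have "(\<Sum>i\<in>UNIV. cnj (H$i$l) * H$i$k) / N = (if k = l then 1 else 0)"
    unfolding H'_def matrix_matrix_mult_def mat_def
    by (simp add: sum_divide_distrib[symmetric])
  then show ?thesis
    unfolding N_def by (simp add: mult.commute split: if_splits)
qed

lemma hadamard_transpose:
  assumes "complex_hadamard H"
  shows "complex_hadamard (transpose H)"
  using hadamard_norm_entry[OF assms] hadamard_col_orth[OF assms]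
  unfolding complex_hadamard_def transpose_def by simp

lemma hadamard_sum_col_quotient:
  assumes "complex_hadamard (H::complex^'n^'n)"
  shows "(\<Sum>i\<in>UNIV. H$i$k / H$i$l) = (if k = l then of_nat CARD('n) else 0)"
  using hadamard_col_orth[OF assms]
  by (simp add: complex_unit_cnj_eq_inverse hadamard_norm_entry[OF assms] divide_inverse)

lemma is_orth_proj_proj_line:
  fixes v :: "complex^'n"
  assumes "(\<Sum>m\<in>UNIV. v$m * cnj (v$m)) \<noteq> 0"
  shows "is_orth_proj (proj_line v)"
proof -
  define s where "s = (\<Sum>m\<in>UNIV. v$m * cnj (v$m))"
  have "s \<noteq> 0" using assms s_def by simp
  have "cnj s = s" unfolding s_def by (simp add: mult.commute)
  have "(\<Sum>m\<in>UNIV. v$k * cnj (v$m) / s * (v$m * cnj (v$l) / s)) = v$k * cnj (v$l) / s"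
    for k l
  proof -
    have "(\<Sum>m\<in>UNIV. v$k * cnj (v$m) / s * (v$m * cnj (v$l) / s))
        = s * (v$k * cnj (v$l) / s / s)"
      unfolding s_def
      by (simp add: sum_distrib_right sum_distrib_left sum_divide_distrib[symmetric] algebra_simps)
    also have "\<dots> = v$k * cnj (v$l) / s" using \<open>s \<noteq> 0\<close> by simp
    finally show ?thesis .
  qed
  then have "proj_line v ** proj_line v = proj_line v"
    unfolding proj_line_def matrix_matrix_mult_def s_def[symmetric] by (simp add: vec_eq_iff)
  moreover have "cadjoint (proj_line v) = proj_line v"
    unfolding cadjoint_def proj_line_def s_def[symmetric]
    by (simp add: vec_eq_iff \<open>cnj s = s\<close> mult.commute)
  ultimately show ?thesis unfolding is_orth_proj_def by simp
qed

lemma Umat_eq: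
  assumes "complex_hadamard (H::complex^'n^'n)"
  shows "Umat H i j = (\<chi> k l. (1 / of_nat CARD('n)) * ((H$i$k * H$j$l) / (H$i$l * H$j$k)))"
proof -
  note unit = hadamard_norm_entry[OF assms]
  define v where "v = (\<chi> k. H$i$k / H$j$k)"
  have "norm (v$k) = 1" for k
    unfolding v_def using unit by (simp add: norm_divide)
  then have "(\<Sum>m\<in>UNIV. v$m * cnj (v$m)) = of_nat CARD('n)"
    by (simp add: complex_unit_mult_cnj)
  then show ?thesis
    unfolding Umat_def v_def[symmetric] proj_line_def
    using unit hadamard_entry_nonzero[OF assms]
    by (simp add: vec_eq_iff complex_unit_cnj_eq_inverse v_def field_simps)
qed

lemma is_orth_proj_Umat:
  assumes "complex_hadamard (H::complex^'n^'n)"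
  shows "is_orth_proj (Umat H i j)"
  unfolding Umat_def
proof (rule is_orth_proj_proj_line)
  have "(H$i$m / H$j$m) * cnj (H$i$m / H$j$m) = 1" for m
    using hadamard_norm_entry[OF assms] by (simp add: complex_unit_mult_cnj norm_divide)
  then show "(\<Sum>m\<in>UNIV. (\<chi> k. H$i$k / H$j$k)$m * cnj ((\<chi> k. H$i$k / H$j$k)$m)) \<noteq> 0"
    by simp
qed

lemma Umat_row_sum:
  assumes "complex_hadamard (H::complex^'n^'n)"
  shows "(\<Sum>j\<in>UNIV. Umat H i j) = mat 1"
proof -
  have "(\<Sum>j\<in>UNIV. Umat H i j) $ k $ l
      = 1 / of_nat CARD('n) * (H$i$k / H$i$l) * (\<Sum>j\<in>UNIV. H$j$l / H$j$k)" for k l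
    by (simp add: Umat_eq[OF assms] sum_distrib_left mult.assoc)
  then show ?thesis
    using hadamard_entry_nonzero[OF assms]
    by (simp add: vec_eq_iff mat_def hadamard_sum_col_quotient[OF assms])
qed

lemma Umat_col_sum:
  assumes "complex_hadamard (H::complex^'n^'n)"
  shows "(\<Sum>i\<in>UNIV. Umat H i j) = mat 1"
proof -
  have "(\<Sum>i\<in>UNIV. Umat H i j) $ k $ l
      = 1 / of_nat CARD('n) * (H$j$l / H$j$k) * (\<Sum>i\<in>UNIV. H$i$k / H$i$l)" for k l
    by (simp add: Umat_eq[OF assms] sum_distrib_left sum_divide_distrib mult_ac)
  then show ?thesis
    using hadamard_entry_nonzero[OF assms]
    by (simp add: vec_eq_iff mat_def hadamard_sum_col_quotient[OF assms])
qed

lemma magic_Umat: "complex_hadamard H \<Longrightarrow> magic (Umat H)"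
  unfolding magic_def using is_orth_proj_Umat Umat_row_sum Umat_col_sum by blast

lemma Uprime_Umat:
  assumes "complex_hadamard H"
  shows "Uprime (Umat H) = Umat (transpose H)"
  unfolding Uprime_def fun_eq_iff Umat_eq[OF assms] Umat_eq[OF hadamard_transpose[OF assms]]
  by (simp add: vec_eq_iff transpose_def mult.commute)

theorem proposition2p3:
  fixes H :: "complex^'n^'n"
  assumes "complex_hadamard H"
  shows "(\<forall>i j. Umat H i j =
            (\<chi> k l. (1 / of_nat CARD('n)) * ((H$i$k * H$j$l) / (H$i$l * H$j$k))))
       \<and> magic (Umat H)
       \<and> magic (Uprime (Umat H))
       \<and> (\<forall>i j. Uprime (Umat H) i j = Umat (transpose H) i j)"
  using Umat_eq[OF assms] magic_Umat[OF assms] magic_Umat[OF hadamard_transpose[OF assms]]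
    Uprime_Umat[OF assms]
  by simp

end
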